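(* For every positive integer $n$, the set $I^n_{\mathfrak U}=\{\operatorname{is}(X): X\in\mathfrak U,\ |X|=n\}$ is an open dense subset of the space of isometry types of ultrametric spaces $(X,d)$ with $|X|\leqslant n$, endowed with the Gromov–Hausdorff metric.
   Context: $\operatorname{Sp}(X)=\{d(x,y):x\neq y\}$; $\mathfrak U$ is the class of finite ultrametric spaces $X$ with $|\operatorname{Sp}(X)|=|X|-1$. $\operatorname{is}(X)$ denotes the isometry type of $X$. For bounded metric spaces $X,Y$ and $\varepsilon>0$, $d_{GH}(\operatorname{is}(X),\operatorname{is}(Y))<\varepsilon$ iff there is a metric space $(Z,d_Z)$ with subspaces $X',Y'$ isometric to $X,Y$ such that each point of $X'$ lies at $d_Z$-distance $<\varepsilon$ from some point of $Y'$ and each point of $Y'$ lies at distance $<\varepsilon$ from some point of $X'$; $d_{GH}$ is a metric on isometry types of compact (in particular finite) metric spaces. *)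

theory Defs
  imports "HOL-Analysis.Analysis"
begin

definition ultrametric :: "'a set \<Rightarrow> ('a \<Rightarrow> 'a \<Rightarrow> real) \<Rightarrow> bool" where
  "ultrametric A d \<longleftrightarrow> Metric_space A d \<and>
     (\<forall>x\<in>A. \<forall>y\<in>A. \<forall>z\<in>A. d x y \<le> max (d x z) (d z y))"

definition Sp :: "'a set \<Rightarrow> ('a \<Rightarrow> 'a \<Rightarrow> real) \<Rightarrow> real set" where
  "Sp A d = {d x y | x y. x \<in> A \<and> y \<in> A \<and> x \<noteq> y}"

definition classU :: "'a set \<Rightarrow> ('a \<Rightarrow> 'a \<Rightarrow> real) \<Rightarrow> bool" where
  "classU A d \<longleftrightarrow> finite A \<and> A \<noteq> {} \<and> ultrametric A d \<and> card (Sp A d) = card A - 1"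

text \<open>d_GH(is(X), is(Y)) < eps: there is a metric space Z containing isometric copies of X and Y
  that are mutually eps-close. For finite X, Y one may restrict Z to the union of the two
  copies, which injects into the disjoint sum of the carrier types; hence taking the carrier
  of Z inside type 'a + 'b loses no generality.\<close>
definition gh_less :: "'a set \<Rightarrow> ('a \<Rightarrow> 'a \<Rightarrow> real) \<Rightarrow> 'b set \<Rightarrow> ('b \<Rightarrow> 'b \<Rightarrow> real) \<Rightarrow> real \<Rightarrow> bool" where
  "gh_less A d B e \<epsilon> \<longleftrightarrow>
     (\<exists>(Z :: ('a + 'b) set) dZ f g.
        Metric_space Z dZ \<and> f ` A \<subseteq> Z \<and> g ` B \<subseteq> Z \<and>
        (\<forall>x\<in>A. \<forall>y\<in>A. dZ (f x) (f y) = d x y) \<and>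
        (\<forall>x\<in>B. \<forall>y\<in>B. dZ (g x) (g y) = e x y) \<and>
        (\<forall>x\<in>A. \<exists>y\<in>B. dZ (f x) (g y) < \<epsilon>) \<and>
        (\<forall>y\<in>B. \<exists>x\<in>A. dZ (f x) (g y) < \<epsilon>))"

definition ultra_le :: "nat \<Rightarrow> 'a set \<Rightarrow> ('a \<Rightarrow> 'a \<Rightarrow> real) \<Rightarrow> bool" where
  "ultra_le n A d \<longleftrightarrow> finite A \<and> A \<noteq> {} \<and> ultrametric A d \<and> card A \<le> n"

end

theory Submission
  imports Defs
begin

text \<open>Openness: the spectrum of a space A in U consists of n - 1 distinct positive values. A
  space with at most n points that is Gromov-Hausdorff closer to A than a quarter of the least
  gap between these values and 0 receives an injective map from A moving each distance by less
  than half that gap, so it also has n points and n - 1 distinct distances. Density: a finite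
  ultrametric space with at most n points is approximated by a space in U with n points, built
  one point at a time by attaching each new point above an old one at a height that is new to
  the spectrum and only slightly above the distance it has to approximate.\<close>

lemma ultrametric_imp_Metric_space: "ultrametric A d \<Longrightarrow> Metric_space A d"
  by (simp add: ultrametric_def)

lemma ultrametric_le_max:
  "\<lbrakk>ultrametric A d; x \<in> A; y \<in> A; z \<in> A\<rbrakk> \<Longrightarrow> d x y \<le> max (d x z) (d z y)"
  by (simp add: ultrametric_def)

lemma ultrametric_subset: "\<lbrakk>ultrametric A d; A' \<subseteq> A\<rbrakk> \<Longrightarrow> ultrametric A' d"
  unfolding ultrametric_def using Metric_space.subspace by blast

lemma finite_Sp: "finite A \<Longrightarrow> finite (Sp A d)"
proof -
  assume "finite A"
  have "Sp A d \<subseteq> (\<lambda>(x, y). d x y) ` (A \<times> A)" unfolding Sp_def by auto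
  then show ?thesis using \<open>finite A\<close> finite_subset by blast
qed

text \<open>The two points of a closest pair are equidistant from every third point, so removing
  one of them loses at most the minimal distance from the spectrum.\<close>
lemma Sp_remove_closest:
  assumes U: "ultrametric A d" and xy: "x \<in> A" "y \<in> A" "x \<noteq> y"
    and closest: "\<And>u v. \<lbrakk>u \<in> A; v \<in> A; u \<noteq> v\<rbrakk> \<Longrightarrow> d x y \<le> d u v"
  shows "Sp A d \<subseteq> insert (d x y) (Sp (A - {x}) d)"
proof
  interpret Metric_space A d by (rule ultrametric_imp_Metric_space[OF U])
  have equidistant: "d x z = d y z" if "z \<in> A" "z \<noteq> x" "z \<noteq> y" for z
  proof -
    have "d x z \<le> max (d x y) (d y z)" "d y z \<le> max (d y x) (d x z)"
      using ultrametric_le_max[OF U] xy that by auto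
    moreover have "d x y \<le> d y z" "d x y \<le> d x z"
      using closest[of y z] closest[of x z] xy that by simp_all
    ultimately show ?thesis using commute[of x y] by linarith
  qed
  fix s assume "s \<in> Sp A d"
  then obtain u v where uv: "u \<in> A" "v \<in> A" "u \<noteq> v" "s = d u v" unfolding Sp_def by auto
  show "s \<in> insert (d x y) (Sp (A - {x}) d)"
  proof (cases "u = x \<or> v = x")
    case False
    then show ?thesis using uv unfolding Sp_def by auto
  next
    case True
    then obtain w where w: "w \<in> A" "w \<noteq> x" "s = d x w"
    proof
      assume "u = x"
      then show thesis using that[of v] uv by simp
    next
      assume "v = x"
      then show thesis using that[of u] uv commute[of u v] by simp
    qed
    show ?thesis
    proof (cases "w = y")
      case False
      then have "s = d y w" using equidistant[of w] w by simp
      then show ?thesis using False w xy unfolding Sp_def by auto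
    qed (use w in simp)
  qed
qed

lemma card_Sp_le:
  assumes "ultrametric A d" "finite A"
  shows "card (Sp A d) \<le> card A - 1"
  using assms
proof (induction "card A" arbitrary: A rule: less_induct)
  case less
  show ?case
  proof (cases "Sp A d = {}")
    case False
    have fin: "finite (Sp A d)" using finite_Sp less.prems(2) .
    then have "Min (Sp A d) \<in> Sp A d" using False by simp
    then obtain x y where xy: "x \<in> A" "y \<in> A" "x \<noteq> y" "d x y = Min (Sp A d)"
      unfolding Sp_def by auto
    have "d x y \<le> d u v" if "u \<in> A" "v \<in> A" "u \<noteq> v" for u v
    proof -
      have "d u v \<in> Sp A d" using that unfolding Sp_def by auto
      then show ?thesis using fin xy(4) by simp
    qed
    then have "Sp A d \<subseteq> insert (d x y) (Sp (A - {x}) d)"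
      by (rule Sp_remove_closest[OF less.prems(1) xy(1-3)])
    then have "card (Sp A d) \<le> card (insert (d x y) (Sp (A - {x}) d))"
      by (rule card_mono[rotated]) (simp add: finite_Sp less.prems(2))
    also have "\<dots> \<le> Suc (card (Sp (A - {x}) d))"
      using finite_Sp[of "A - {x}" d] less.prems(2) by (simp add: card_insert_if)
    also have "card (Sp (A - {x}) d) \<le> card (A - {x}) - 1"
      using less.hyps[of "A - {x}"] less.prems xy(1) ultrametric_subset[of A d "A - {x}"]
        card_Diff1_less[of A x]
      by blast
    finally have "card (Sp A d) \<le> Suc (card (A - {x}) - 1)" by simp
    moreover have "2 \<le> card A"
      using card_mono[OF less.prems(2), of "{x, y}"] xy by simp
    ultimately show ?thesis using card_Diff_singleton[OF xy(1)] by linarith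
  qed simp
qed

definition ultra_attach :: "('a \<Rightarrow> 'a \<Rightarrow> real) \<Rightarrow> 'a \<Rightarrow> real \<Rightarrow> 'a \<Rightarrow> 'a \<Rightarrow> 'a \<Rightarrow> real"
  where "ultra_attach d q c p x y =
    (if x = p \<and> y = p then 0 else if x = p then max (d q y) c
     else if y = p then max (d q x) c else d x y)"

lemma ultra_attach_simps [simp]:
  "ultra_attach d q c p p p = 0"
  "x \<noteq> p \<Longrightarrow> ultra_attach d q c p p x = max (d q x) c"
  "x \<noteq> p \<Longrightarrow> ultra_attach d q c p x p = max (d q x) c"
  "x \<noteq> p \<Longrightarrow> y \<noteq> p \<Longrightarrow> ultra_attach d q c p x y = d x y"
  by (auto simp: ultra_attach_def)

lemma ultrametric_attach:
  assumes U: "ultrametric A d" and q: "q \<in> A" and p: "p \<notin> A" and c: "c > 0"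
  shows "ultrametric (insert p A) (ultra_attach d q c p)"
proof -
  interpret Metric_space A d by (rule ultrametric_imp_Metric_space[OF U])
  let ?d = "ultra_attach d q c p"
  have pA: "x \<in> A \<Longrightarrow> x \<noteq> p" for x using p by auto
  have nonneg': "0 \<le> ?d x y" for x y
    using nonneg[of q x] nonneg[of q y] nonneg[of x y] c by (auto simp: ultra_attach_def)
  have commute': "?d x y = ?d y x" for x y
    using commute by (auto simp: ultra_attach_def)
  have ultra': "?d x y \<le> max (?d x z) (?d z y)"
    if xyz: "x \<in> insert p A" "y \<in> insert p A" "z \<in> insert p A" for x y z
  proof -
    have le_max: "d u v \<le> max (d u w) (d w v)" if "u \<in> A" "v \<in> A" "w \<in> A" for u v w
      using ultrametric_le_max[OF U that] .
    consider "x = p" "y = p" | "x = p" "z = p" | "y = p" "z = p"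
      | "x = p" "y \<in> A" "z \<in> A" | "y = p" "x \<in> A" "z \<in> A"
      | "z = p" "x \<in> A" "y \<in> A" | "x \<in> A" "y \<in> A" "z \<in> A"
      using xyz by blast
    then show ?thesis
    proof cases
      case 4
      then show ?thesis using le_max[of q y z] q pA by (auto simp: max_def split: if_splits)
    next
      case 5
      then show ?thesis using le_max[of q x z] q pA commute[of z x] by (auto simp: max_def split: if_splits)
    next
      case 6
      then show ?thesis using le_max[of x y q] q pA commute[of x q] by (auto simp: max_def split: if_splits)
    next
      case 7
      then show ?thesis using le_max[of x y z] pA by simp
    qed (use nonneg' commute' in \<open>auto simp: max_def\<close>)
  qed
  show ?thesis
    unfolding ultrametric_def
  proof (intro conjI ballI)
    show "Metric_space (insert p A) ?d"
    proof
      show "?d x y = 0 \<longleftrightarrow> x = y" if "x \<in> insert p A" "y \<in> insert p A" for x y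
        using that pA c by (auto simp: max_def split: if_splits)
      show "?d x z \<le> ?d x y + ?d y z" if "x \<in> insert p A" "y \<in> insert p A" "z \<in> insert p A"
        for x y z
        using ultra'[OF that(1,3,2)] nonneg'[of x y] nonneg'[of y z] by linarith
    qed (use nonneg' commute' in auto)
  qed (rule ultra')
qed

lemma Sp_attach:
  assumes "ultrametric A d" "q \<in> A" "p \<notin> A" "c \<ge> 0"
  shows "insert c (Sp A d) \<subseteq> Sp (insert p A) (ultra_attach d q c p)"
proof -
  have "d q q = 0"
    using Metric_space.zero[OF ultrametric_imp_Metric_space[OF assms(1)]] assms(2) by simp
  moreover have "q \<noteq> p" using assms(2,3) by blast
  ultimately have "c = ultra_attach d q c p p q" using assms(4) by simp
  then have "c \<in> Sp (insert p A) (ultra_attach d q c p)" using assms unfolding Sp_def by blast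
  moreover have "Sp A d \<subseteq> Sp (insert p A) (ultra_attach d q c p)"
  proof
    fix s assume "s \<in> Sp A d"
    then obtain x y where "x \<in> A" "y \<in> A" "x \<noteq> y" "s = d x y" unfolding Sp_def by auto
    moreover have "x \<noteq> p" "y \<noteq> p" using calculation assms(3) by auto
    ultimately show "s \<in> Sp (insert p A) (ultra_attach d q c p)" unfolding Sp_def by force
  qed
  ultimately show ?thesis by blast
qed

lemma ultrametric_attach_distortion:
  assumes U: "ultrametric B e" and B: "b \<in> B" "b' \<in> B" "z \<in> B"
    and nearest: "e b' b \<le> e b' z"
    and t: "e b z \<le> t" "t \<le> e b z + \<delta>"
    and c: "e b' b < c" "c \<le> e b' b + \<delta>"
  shows "e b' z \<le> max t c \<and> max t c \<le> e b' z + \<delta>"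
proof -
  have "e b' z \<le> max (e b' b) (e b z)" "e b z \<le> max (e b b') (e b' z)"
    using ultrametric_le_max[OF U] B by auto
  moreover have "e b b' = e b' b"
    using Metric_space.commute[OF ultrametric_imp_Metric_space[OF U]] by simp
  ultimately show ?thesis using nearest t c by (auto simp: max_def split: if_splits)
qed

definition upper_approx :: "('a \<Rightarrow> 'b) \<Rightarrow> 'a set \<Rightarrow> ('a \<Rightarrow> 'a \<Rightarrow> real) \<Rightarrow> ('b \<Rightarrow> 'b \<Rightarrow> real) \<Rightarrow> real \<Rightarrow> bool"
  where "upper_approx \<phi> A d e \<delta> \<longleftrightarrow>
    (\<forall>x\<in>A. \<forall>y\<in>A. e (\<phi> x) (\<phi> y) \<le> d x y \<and> d x y \<le> e (\<phi> x) (\<phi> y) + \<delta>)"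

text \<open>The two spaces are glued along the map: a point a of A is placed at distance
  e (\<phi> a) b + \<epsilon>/2 from a point b of B.\<close>
lemma gh_less_if_upper_approx:
  assumes MA: "Metric_space A d" and MB: "Metric_space B e" and onto: "\<phi> ` A = B"
    and approx: "upper_approx \<phi> A d e \<epsilon>" and "\<epsilon> > 0"
  shows "gh_less A d B e \<epsilon>"
proof -
  define \<pi> :: "'a + 'b \<Rightarrow> 'b" where "\<pi> = case_sum \<phi> id"
  define dZ :: "'a + 'b \<Rightarrow> 'a + 'b \<Rightarrow> real" where
    "dZ u v = (case (u, v) of (Inl a, Inl a') \<Rightarrow> d a a' | (Inr b, Inr b') \<Rightarrow> e b b'
               | _ \<Rightarrow> e (\<pi> u) (\<pi> v) + \<epsilon>/2)" for u v
  define Z where "Z = Inl ` A \<union> Inr ` B"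
  interpret A: Metric_space A d by (rule MA)
  interpret B: Metric_space B e by (rule MB)
  have distortion: "e (\<phi> x) (\<phi> y) \<le> d x y" "d x y \<le> e (\<phi> x) (\<phi> y) + \<epsilon>"
    if "x \<in> A" "y \<in> A" for x y
    using approx that unfolding upper_approx_def by auto
  have \<pi>Z: "\<pi> u \<in> B" if "u \<in> Z" for u using that onto unfolding Z_def \<pi>_def by auto
  have "Metric_space Z dZ"
  proof
    show "0 \<le> dZ u v" for u v
      using A.nonneg B.nonneg \<open>\<epsilon> > 0\<close> by (auto simp: dZ_def split: sum.split)
    show "dZ u v = dZ v u" for u v
      using A.commute B.commute by (auto simp: dZ_def split: sum.split)
    show "dZ u v = 0 \<longleftrightarrow> u = v" if "u \<in> Z" "v \<in> Z" for u v
      using that B.nonneg \<open>\<epsilon> > 0\<close> unfolding Z_def dZ_def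
      by (auto simp: add_nonneg_pos[THEN less_imp_neq, symmetric])
    show "dZ u w \<le> dZ u v + dZ v w" if "u \<in> Z" "v \<in> Z" "w \<in> Z" for u v w
    proof -
      have "e (\<pi> u) (\<pi> w) \<le> e (\<pi> u) (\<pi> v) + e (\<pi> v) (\<pi> w)"
        using B.triangle \<pi>Z that by blast
      then show ?thesis
        using that A.triangle distortion B.commute unfolding Z_def
        by (cases u; cases v; cases w) (fastforce simp: dZ_def \<pi>_def)+
    qed
  qed
  moreover have "dZ (Inl a) (Inr (\<phi> a)) < \<epsilon>" if "a \<in> A" for a
    using that onto B.zero \<open>\<epsilon> > 0\<close> by (auto simp: dZ_def \<pi>_def)
  ultimately show ?thesis
    unfolding gh_less_def using onto
    by (intro exI[of _ Z] exI[of _ dZ] exI[of _ Inl] exI[of _ Inr]) (auto simp: Z_def dZ_def)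
qed

lemma classU_singleton: "classU {a} (\<lambda>_ _. 0)"
proof -
  have "Metric_space {a} (\<lambda>_ _. 0 :: real)" by unfold_locales auto
  then show ?thesis by (simp add: classU_def ultrametric_def Sp_def)
qed

lemma classU_attach:
  assumes "classU A d" "q \<in> A" "p \<notin> A" "c > 0" "c \<notin> Sp A d"
  shows "classU (insert p A) (ultra_attach d q c p)"
proof -
  have finA: "finite A" and UA: "ultrametric A d" and SpA: "card (Sp A d) = card A - 1"
    and "A \<noteq> {}" using assms(1) unfolding classU_def by auto
  have U': "ultrametric (insert p A) (ultra_attach d q c p)"
    by (rule ultrametric_attach[OF UA assms(2-4)])
  have "card (insert p A) - 1 = card (insert c (Sp A d))"
    using assms(3,5) finA finite_Sp[OF finA] SpA \<open>A \<noteq> {}\<close> by (simp add: card_gt_0_iff)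
  also have "\<dots> \<le> card (Sp (insert p A) (ultra_attach d q c p))"
    using finite_Sp[of "insert p A"] finA Sp_attach[OF UA assms(2,3) less_imp_le[OF assms(4)]]
    by (intro card_mono) simp_all
  finally show ?thesis
    using card_Sp_le[OF U'] U' finA unfolding classU_def by simp
qed

lemma upper_approx_attach:
  assumes UB: "ultrametric B e" and b': "b' \<in> B" and \<phi>: "\<phi> ` A \<subseteq> B"
    and q: "q \<in> A" and nearest: "\<And>z. z \<in> A \<Longrightarrow> e b' (\<phi> q) \<le> e b' (\<phi> z)"
    and c: "e b' (\<phi> q) < c" "c \<le> e b' (\<phi> q) + \<delta>"
    and p: "p \<notin> A" and approx: "upper_approx \<phi> A d e \<delta>" and "\<delta> > 0"
  shows "upper_approx (\<phi>(p := b')) (insert p A) (ultra_attach d q c p) e \<delta>"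
proof -
  interpret B: Metric_space B e by (rule ultrametric_imp_Metric_space[OF UB])
  let ?\<psi> = "\<phi>(p := b')" and ?d = "ultra_attach d q c p"
  have new: "e b' (\<phi> z) \<le> ?d p z \<and> ?d p z \<le> e b' (\<phi> z) + \<delta>" if "z \<in> A" for z
  proof -
    have "e (\<phi> q) (\<phi> z) \<le> d q z \<and> d q z \<le> e (\<phi> q) (\<phi> z) + \<delta>"
      using approx q that unfolding upper_approx_def by blast
    moreover have "z \<noteq> p" using that p by auto
    ultimately show ?thesis
      using ultrametric_attach_distortion[OF UB _ b' _ nearest[OF that] _ _ c] \<phi> q that by auto
  qed
  have "e (?\<psi> x) (?\<psi> y) \<le> ?d x y \<and> ?d x y \<le> e (?\<psi> x) (?\<psi> y) + \<delta>"
    if xy: "x \<in> insert p A" "y \<in> insert p A" for x y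
  proof -
    consider "x = p" "y = p" | "x = p" "y \<in> A" | "x \<in> A" "y = p" | "x \<in> A" "y \<in> A"
      using xy by blast
    then show ?thesis
    proof cases
      case 1
      then show ?thesis using B.zero[OF b' b'] \<open>\<delta> > 0\<close> by simp
    next
      case 2
      moreover have "y \<noteq> p" using 2 p by blast
      ultimately show ?thesis using new[of y] by simp
    next
      case 3
      moreover have "x \<noteq> p" using 3 p by blast
      ultimately show ?thesis using new[of x] B.commute[of b' "\<phi> x"] by simp
    next
      case 4
      moreover have "x \<noteq> p" "y \<noteq> p" using 4 p by blast+
      ultimately show ?thesis using approx unfolding upper_approx_def by simp
    qed
  qed
  then show ?thesis unfolding upper_approx_def by blast
qed

text \<open>The new point is mapped to b' and attached above a preimage of the point of \<phi> ` A
  nearest to b', at a height slightly larger than their distance and new to the spectrum.\<close>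
lemma classU_approx_insert:
  fixes A :: "'a set"
  assumes inf: "infinite (UNIV :: 'a set)" and UB: "ultrametric (insert b' (\<phi> ` A)) e"
    and A: "classU A d" and approx: "upper_approx \<phi> A d e \<delta>" and "\<delta> > 0"
  shows "\<exists>(A' :: 'a set) d' \<psi>. classU A' d' \<and> card A' = Suc (card A) \<and>
           \<psi> ` A' = insert b' (\<phi> ` A) \<and> upper_approx \<psi> A' d' e \<delta>"
proof -
  interpret B: Metric_space "insert b' (\<phi> ` A)" e by (rule ultrametric_imp_Metric_space[OF UB])
  have finA: "finite A" and "A \<noteq> {}" using A unfolding classU_def by auto
  obtain q where q: "q \<in> A" "\<And>z. z \<in> A \<Longrightarrow> e b' (\<phi> q) \<le> e b' (\<phi> z)"
  proof -
    have "Min ((\<lambda>z. e b' (\<phi> z)) ` A) \<in> (\<lambda>z. e b' (\<phi> z)) ` A" using finA \<open>A \<noteq> {}\<close> by simp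
    then obtain q where "q \<in> A" "e b' (\<phi> q) = Min ((\<lambda>z. e b' (\<phi> z)) ` A)" by auto
    then show thesis using that finA by simp
  qed
  have "infinite ({e b' (\<phi> q)<..e b' (\<phi> q) + \<delta>} - Sp A d)"
    using \<open>\<delta> > 0\<close> finite_Sp[OF finA] by auto
  then obtain c where c: "e b' (\<phi> q) < c" "c \<le> e b' (\<phi> q) + \<delta>" "c \<notin> Sp A d"
    by (metis Diff_iff greaterThanAtMost_iff finite.emptyI ex_in_conv)
  have "c > 0" using c(1) B.nonneg[of b' "\<phi> q"] by linarith
  obtain p where p: "p \<notin> A" using ex_new_if_finite[OF inf finA] by auto
  have "\<phi>(p := b') ` insert p A = insert b' (\<phi> ` A)"
    using p by (auto intro: image_cong)
  moreover have "upper_approx (\<phi>(p := b')) (insert p A) (ultra_attach d q c p) e \<delta>"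
    by (rule upper_approx_attach[OF UB _ _ q c(1,2) p approx \<open>\<delta> > 0\<close>]) auto
  ultimately show ?thesis
    using classU_attach[OF A q(1) p \<open>c > 0\<close> c(3)] finA p
    by (intro exI[of _ "insert p A"] exI[of _ "ultra_attach d q c p"] exI[of _ "\<phi>(p := b')"]) simp
qed

text \<open>Removing a point b' from B when B has n points, or none when it has fewer, leaves a space
  that is approximated by induction; the point b' is then added back.\<close>
lemma exists_classU_approx:
  assumes inf: "infinite (UNIV :: 'a set)" and "1 \<le> n"
    and "ultrametric B e" "finite B" "B \<noteq> {}" "card B \<le> n" and "\<delta> > 0"
  shows "\<exists>(A :: 'a set) d \<phi>. classU A d \<and> card A = n \<and> \<phi> ` A = B \<and> upper_approx \<phi> A d e \<delta>"
  using assms(2-6)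
proof (induction n arbitrary: B rule: nat_induct_at_least)
  case base
  then obtain b where "B = {b}" by (metis card_1_singletonE card_0_eq le_Suc_eq le_zero_eq One_nat_def)
  moreover have "e b b = 0"
    using Metric_space.zero[OF ultrametric_imp_Metric_space[OF base.prems(1)]] calculation by simp
  ultimately show ?case
    using classU_singleton[of undefined] \<open>\<delta> > 0\<close> unfolding upper_approx_def
    by (intro exI[of _ "{undefined}"] exI[of _ "\<lambda>_ _. 0"] exI[of _ "\<lambda>_. b"]) auto
next
  case (Suc n)
  obtain b' where b': "b' \<in> B" using Suc.prems(3) by auto
  define B' where "B' = (if card B = Suc n then B - {b'} else B)"
  have B'B: "B' \<subseteq> B" and insB': "insert b' B' = B" unfolding B'_def using b' by auto
  have "finite B'" using B'B Suc.prems(2) finite_subset by auto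
  moreover have "card B' \<le> n" unfolding B'_def using Suc.prems(4) Suc.prems(2) b' by auto
  moreover have "B' \<noteq> {}"
  proof
    assume "B' = {}"
    then have "card B = Suc n" "B \<subseteq> {b'}"
      using Suc.prems(3) unfolding B'_def by (metis Diff_eq_empty_iff, metis Diff_eq_empty_iff)
    then show False using card_mono[of "{b'}" B] Suc.hyps by simp
  qed
  ultimately obtain A :: "'a set" and d \<phi> where A: "classU A d" "card A = n" "\<phi> ` A = B'"
    and "upper_approx \<phi> A d e \<delta>"
    using Suc.IH[OF ultrametric_subset[OF Suc.prems(1) B'B]] by blast
  then show ?case
    using classU_approx_insert[OF inf _ A(1) _ \<open>\<delta> > 0\<close>, of b'] Suc.prems(1) insB' by auto
qed

lemma gh_less_imp_close_map:
  assumes "gh_less A d B e \<epsilon>"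
  shows "\<exists>\<psi>. \<psi> ` A \<subseteq> B \<and> (\<forall>x\<in>A. \<forall>y\<in>A. \<bar>d x y - e (\<psi> x) (\<psi> y)\<bar> < 2 * \<epsilon>)"
proof -
  obtain Z :: "('a + 'b) set" and dZ f g where MZ: "Metric_space Z dZ"
    and fg: "f ` A \<subseteq> Z" "g ` B \<subseteq> Z"
    and f: "\<forall>x\<in>A. \<forall>y\<in>A. dZ (f x) (f y) = d x y"
    and g: "\<forall>x\<in>B. \<forall>y\<in>B. dZ (g x) (g y) = e x y"
    and near: "\<forall>x\<in>A. \<exists>y\<in>B. dZ (f x) (g y) < \<epsilon>"
    using assms unfolding gh_less_def by blast
  interpret Metric_space Z dZ by (rule MZ)
  obtain \<psi> where \<psi>: "\<forall>x\<in>A. \<psi> x \<in> B \<and> dZ (f x) (g (\<psi> x)) < \<epsilon>"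
    using bchoice[of A "\<lambda>x y. y \<in> B \<and> dZ (f x) (g y) < \<epsilon>"] near by blast
  have "\<bar>d x y - e (\<psi> x) (\<psi> y)\<bar> < 2 * \<epsilon>" if "x \<in> A" "y \<in> A" for x y
  proof -
    have Z: "f x \<in> Z" "f y \<in> Z" "g (\<psi> x) \<in> Z" "g (\<psi> y) \<in> Z" using fg \<psi> that by auto
    have "dZ (f x) (f y) = d x y" "dZ (g (\<psi> x)) (g (\<psi> y)) = e (\<psi> x) (\<psi> y)"
      using f g \<psi> that by auto
    moreover have "dZ (f x) (g (\<psi> x)) < \<epsilon>" "dZ (f y) (g (\<psi> y)) < \<epsilon>" using \<psi> that by auto
    ultimately show ?thesis
      using triangle[OF Z(1) Z(3) Z(2)] triangle[OF Z(3) Z(4) Z(2)]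
        triangle[OF Z(3) Z(1) Z(4)] triangle[OF Z(1) Z(2) Z(4)]
        commute[of "f x" "g (\<psi> x)"] commute[of "f y" "g (\<psi> y)"] by linarith
  qed
  then show ?thesis using \<psi> by (intro exI[of _ \<psi>]) auto
qed

lemma finite_real_set_separated:
  assumes "finite (S :: real set)"
  shows "\<exists>g>0. \<forall>s\<in>S. \<forall>t\<in>S. s \<noteq> t \<longrightarrow> g \<le> \<bar>s - t\<bar>"
proof -
  define D where "D = insert 1 ((\<lambda>(s, t). \<bar>s - t\<bar>) ` {(s, t). s \<in> S \<and> t \<in> S \<and> s \<noteq> t})"
  have "finite D" unfolding D_def using assms by (auto intro: finite_subset[of _ "S \<times> S"])
  moreover have "\<forall>x\<in>D. x > 0" unfolding D_def by auto
  ultimately show ?thesis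
    unfolding D_def by (intro exI[of _ "Min D"]) (auto simp: D_def intro!: Min_le)
qed

lemma card_le_if_separated_approx:
  assumes "finite T" and approx: "\<And>s. s \<in> S \<Longrightarrow> \<exists>t\<in>T. \<bar>s - t\<bar> < g / 2"
    and separated: "\<And>s t. \<lbrakk>s \<in> S; t \<in> S; s \<noteq> t\<rbrakk> \<Longrightarrow> g \<le> \<bar>s - t\<bar>"
  shows "card S \<le> card (T :: real set)"
proof -
  obtain h where h: "\<forall>s\<in>S. h s \<in> T \<and> \<bar>s - h s\<bar> < g / 2"
    using bchoice[of S "\<lambda>s t. t \<in> T \<and> \<bar>s - t\<bar> < g / 2"] approx by blast
  have "inj_on h S"
  proof (rule inj_onI, rule ccontr)
    fix s t assume "s \<in> S" "t \<in> S" "h s = h t" "s \<noteq> t"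
    then have "\<bar>s - h s\<bar> < g / 2" "\<bar>t - h s\<bar> < g / 2" using h by auto
    then have "\<bar>s - t\<bar> < g" by linarith
    then show False using separated[of s t] \<open>s \<in> S\<close> \<open>t \<in> S\<close> \<open>s \<noteq> t\<close> by linarith
  qed
  then show ?thesis using card_inj_on_le[of h S T] h \<open>finite T\<close> by blast
qed

lemma classU_if_close_map:
  assumes A: "classU A d" and B: "ultra_le (card A) B e" and \<psi>: "\<psi> ` A \<subseteq> B"
    and gap: "\<forall>s\<in>insert 0 (Sp A d). \<forall>t\<in>insert 0 (Sp A d). s \<noteq> t \<longrightarrow> g \<le> \<bar>s - t\<bar>"
    and close: "\<forall>x\<in>A. \<forall>y\<in>A. \<bar>d x y - e (\<psi> x) (\<psi> y)\<bar> < g / 2"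
  shows "classU B e \<and> card B = card A"
proof -
  have SpA: "card (Sp A d) = card A - 1" using A unfolding classU_def by auto
  interpret A: Metric_space A d
    using A ultrametric_imp_Metric_space unfolding classU_def by blast
  have finB: "finite B" and UB: "ultrametric B e" and cardB: "card B \<le> card A"
    using B unfolding ultra_le_def by auto
  interpret B: Metric_space B e by (rule ultrametric_imp_Metric_space[OF UB])
  have inj: "inj_on \<psi> A"
  proof (rule inj_onI, rule ccontr)
    fix x y assume xy: "x \<in> A" "y \<in> A" "\<psi> x = \<psi> y" "x \<noteq> y"
    then have "d x y \<in> Sp A d" "d x y \<noteq> 0" using A.zero unfolding Sp_def by auto
    then have "g \<le> d x y" using gap A.nonneg[of x y] by fastforce
    moreover have "e (\<psi> x) (\<psi> y) = 0" using xy B.zero \<psi> by auto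
    moreover have "\<bar>d x y - e (\<psi> x) (\<psi> y)\<bar> < g / 2" using close xy by blast
    ultimately show False by linarith
  qed
  then have cardB': "card B = card A"
    using card_inj_on_le[OF inj \<psi> finB] cardB by simp
  have "card (Sp A d) \<le> card (Sp B e)"
  proof (rule card_le_if_separated_approx[OF finite_Sp[OF finB]])
    fix s assume "s \<in> Sp A d"
    then obtain x y where "x \<in> A" "y \<in> A" "x \<noteq> y" "s = d x y" unfolding Sp_def by auto
    moreover have "\<psi> x \<noteq> \<psi> y" using calculation inj by (auto dest: inj_onD)
    ultimately have "e (\<psi> x) (\<psi> y) \<in> Sp B e" "\<bar>s - e (\<psi> x) (\<psi> y)\<bar> < g / 2"
      using close \<psi> unfolding Sp_def by (blast, blast)
    then show "\<exists>t\<in>Sp B e. \<bar>s - t\<bar> < g / 2" by blast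
  next
    fix s t assume "s \<in> Sp A d" "t \<in> Sp A d" "s \<noteq> t"
    then show "g \<le> \<bar>s - t\<bar>" using gap by blast
  qed
  then have "card (Sp B e) = card B - 1"
    using card_Sp_le[OF UB finB] SpA cardB' by simp
  then show ?thesis using B cardB' unfolding ultra_le_def classU_def by simp
qed

text \<open>Take \<epsilon> a quarter of the least gap between distinct elements of Sp A d \<union> {0}: a space
  within \<epsilon> receives a map from A that is injective and sends distinct spectral values of A
  near distinct spectral values of the space.\<close>
lemma classU_open:
  assumes "classU A d"
  shows "\<exists>\<epsilon>>0. \<forall>(B :: 'b set) e. ultra_le (card A) B e \<and> gh_less A d B e \<epsilon> \<longrightarrow>
           classU B e \<and> card B = card A"
proof -
  have "finite A" using assms unfolding classU_def by auto
  then obtain g where g: "g > 0"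
    and gap: "\<forall>s\<in>insert 0 (Sp A d). \<forall>t\<in>insert 0 (Sp A d). s \<noteq> t \<longrightarrow> g \<le> \<bar>s - t\<bar>"
    using finite_real_set_separated[OF finite.insertI[OF finite_Sp]] by blast
  have "classU B e \<and> card B = card A"
    if B: "ultra_le (card A) B e" and gh: "gh_less A d B e (g / 4)" for B :: "'b set" and e
  proof -
    obtain \<psi> where "\<psi> ` A \<subseteq> B" "\<forall>x\<in>A. \<forall>y\<in>A. \<bar>d x y - e (\<psi> x) (\<psi> y)\<bar> < g / 2"
      using gh_less_imp_close_map[OF gh] by auto
    then show ?thesis using classU_if_close_map[OF assms B _ gap] by blast
  qed
  then show ?thesis using g by (intro exI[of _ "g / 4"]) auto
qed

theorem mainTheorem17:
  fixes n :: nat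
  assumes "n \<ge> 1" and "infinite (UNIV :: 'a set)"
  shows "(\<forall>(A :: 'a set) d. classU A d \<and> card A = n \<longrightarrow>
            (\<exists>\<epsilon>>0. \<forall>(B :: 'a set) e. ultra_le n B e \<and> gh_less A d B e \<epsilon> \<longrightarrow>
                       classU B e \<and> card B = n))
       \<and> (\<forall>(B :: 'a set) e \<epsilon>. ultra_le n B e \<and> \<epsilon> > 0 \<longrightarrow>
            (\<exists>(A :: 'a set) d. classU A d \<and> card A = n \<and> gh_less A d B e \<epsilon>))"
proof (intro conjI allI impI)
  fix A :: "'a set" and d
  assume "classU A d \<and> card A = n"
  then show "\<exists>\<epsilon>>0. \<forall>(B :: 'a set) e. ultra_le n B e \<and> gh_less A d B e \<epsilon> \<longrightarrow> classU B e \<and> card B = n"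
    using classU_open[of A d] by blast
next
  fix B :: "'a set" and e and \<epsilon> :: real
  assume "ultra_le n B e \<and> \<epsilon> > 0"
  then have B: "ultrametric B e" "finite B" "B \<noteq> {}" "card B \<le> n" and "\<epsilon> > 0"
    unfolding ultra_le_def by auto
  obtain A :: "'a set" and d \<phi> where A: "classU A d" "card A = n" "\<phi> ` A = B"
    and "upper_approx \<phi> A d e \<epsilon>"
    using exists_classU_approx[OF assms(2,1) B \<open>\<epsilon> > 0\<close>] by blast
  then have "gh_less A d B e \<epsilon>"
    using gh_less_if_upper_approx[of A d B e \<phi> \<epsilon>] A(1) B(1) \<open>\<epsilon> > 0\<close>
    by (simp add: classU_def ultrametric_imp_Metric_space)
  then show "\<exists>(A :: 'a set) d. classU A d \<and> card A = n \<and> gh_less A d B e \<epsilon>"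
    using A by blast
qed

end
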